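(* Let $G$ be an $n$-node graph with a colored tree labeling, let $k\ge1$, and let $c\ge 3/2$ be a constant with $p=(c\log n)/n^{1/k}\le 1$. Suppose each node of $G$ is independently chosen to be a way-point with probability $p$. Call a short segment any directed path or cycle $S$ contained in some maximal connected subgraph $C$ of $G_k$ all of whose nodes have the same level $\ell$ with $1<\ell\le k$, such that $|S|\le 4n^{1/k}$; call $S$ crowded if it contains more than $8c\log n$ way-points. Then \[ \Pr(G_k \text{ contains a crowded short segment}) = O(1/n). \]
   Context: Colored tree labelings. A colored tree labeling of a graph $G$ of bounded degree assigns to each node $v$ a parent $\mathrm{P}(v)$, a left child $\mathrm{LC}(v)$ and a right child $\mathrm{RC}(v)$, each a port number of $v$ or $\bot$ (a non-$\bot$ value is identified with the neighbor reached through that port; the non-$\bot$ values at $v$ are pairwise distinct), and a color $\chi_{\mathrm{in}}(v)\in\{R,B\}$. Hierarchical forest. Define $\mathrm{level}(v)=1$ if $\mathrm{RC}(v)=\bot$ and $\mathrm{level}(v)=1+\mathrm{level}(\mathrm{RC}(v))$ otherwise. For $k\ge1$, the hierarchical forest $G_k$ contains the edge $\{u,v\}$ iff $\mathrm{level}(u),\mathrm{level}(v)\le k$, $v=\mathrm{P}(u)$, and either ($u=\mathrm{LC}(v)$ and $\mathrm{level}(v)=\mathrm{level}(u)$) or ($u=\mathrm{RC}(v)$ and $\mathrm{level}(v)=\mathrm{level}(u)+1$); it is viewed as directed from $v$ (parent) to $u$ (child). Each maximal connected subgraph of $G_k$ whose nodes all have the same level is a directed path or cycle along $\mathrm{LC}$-edges.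 Here $\log$ denotes the natural logarithm (the statement also holds with base 2). *)

theory Defs
  imports "HOL-Probability.Probability"
begin

datatype color = R | B

text \<open>A port value at v is identified with the neighbour it
points to, so P, LC, RC return an optional neighbour (None = bottom).\<close>

definition colored_tree_labeling ::
  "nat set \<Rightarrow> (nat \<Rightarrow> nat \<Rightarrow> bool) \<Rightarrow> (nat \<Rightarrow> nat option) \<Rightarrow> (nat \<Rightarrow> nat option)
   \<Rightarrow> (nat \<Rightarrow> nat option) \<Rightarrow> (nat \<Rightarrow> color) \<Rightarrow> bool" where
  "colored_tree_labeling V E P LC RC chi \<longleftrightarrow>
     (\<forall>u v. E u v \<longrightarrow> u \<in> V \<and> v \<in> V \<and> E v u \<and> u \<noteq> v) \<and>
     (\<forall>v\<in>V. \<forall>u. (P v = Some u \<or> LC v = Some u \<or> RC v = Some u) \<longrightarrow> E v u) \<and>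
     (\<forall>v\<in>V. (P v \<noteq> None \<and> LC v \<noteq> None \<longrightarrow> P v \<noteq> LC v) \<and>
             (P v \<noteq> None \<and> RC v \<noteq> None \<longrightarrow> P v \<noteq> RC v) \<and>
             (LC v \<noteq> None \<and> RC v \<noteq> None \<longrightarrow> LC v \<noteq> RC v))"

inductive has_level :: "(nat \<Rightarrow> nat option) \<Rightarrow> nat \<Rightarrow> nat \<Rightarrow> bool" for RC where
  base: "RC v = None \<Longrightarrow> has_level RC v 1"
| step: "RC v = Some u \<Longrightarrow> has_level RC u l \<Longrightarrow> has_level RC v (Suc l)"

definition gk_edge ::
  "nat set \<Rightarrow> (nat \<Rightarrow> nat option) \<Rightarrow> (nat \<Rightarrow> nat option) \<Rightarrow> (nat \<Rightarrow> nat option)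
   \<Rightarrow> nat \<Rightarrow> nat \<Rightarrow> nat \<Rightarrow> bool" where
  "gk_edge V P LC RC k v u \<longleftrightarrow> u \<in> V \<and> v \<in> V \<and>
     (\<exists>lu lv. has_level RC u lu \<and> has_level RC v lv \<and> lu \<le> k \<and> lv \<le> k \<and>
        P u = Some v \<and>
        ((LC v = Some u \<and> lv = lu) \<or> (RC v = Some u \<and> lv = lu + 1)))"

definition is_dpath ::
  "nat set \<Rightarrow> (nat \<Rightarrow> nat option) \<Rightarrow> (nat \<Rightarrow> nat option) \<Rightarrow> (nat \<Rightarrow> nat option)
   \<Rightarrow> nat \<Rightarrow> nat list \<Rightarrow> bool" where
  "is_dpath V P LC RC k xs \<longleftrightarrow> xs \<noteq> [] \<and> distinct xs \<and> set xs \<subseteq> V \<and>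
     (\<forall>i. Suc i < length xs \<longrightarrow> gk_edge V P LC RC k (xs ! i) (xs ! Suc i))"

definition is_dcycle ::
  "nat set \<Rightarrow> (nat \<Rightarrow> nat option) \<Rightarrow> (nat \<Rightarrow> nat option) \<Rightarrow> (nat \<Rightarrow> nat option)
   \<Rightarrow> nat \<Rightarrow> nat list \<Rightarrow> bool" where
  "is_dcycle V P LC RC k xs \<longleftrightarrow> is_dpath V P LC RC k xs \<and>
     gk_edge V P LC RC k (last xs) (hd xs)"

text \<open>Short segment: directed path or cycle of G_k, all of whose nodes have the same level l
with 1 < l \<le> k (hence it lies in a maximal same-level connected subgraph of G_k),
with at most 4 n^(1/k) nodes.\<close>
definition short_segment ::
  "nat set \<Rightarrow> (nat \<Rightarrow> nat option) \<Rightarrow> (nat \<Rightarrow> nat option) \<Rightarrow> (nat \<Rightarrow> nat option)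
   \<Rightarrow> nat \<Rightarrow> nat list \<Rightarrow> bool" where
  "short_segment V P LC RC k xs \<longleftrightarrow>
     (is_dpath V P LC RC k xs \<or> is_dcycle V P LC RC k xs) \<and>
     (\<exists>l. 1 < l \<and> l \<le> k \<and> (\<forall>x\<in>set xs. has_level RC x l)) \<and>
     real (length xs) \<le> 4 * real (card V) powr (1 / real k)"

definition crowded :: "nat set \<Rightarrow> real \<Rightarrow> (nat \<Rightarrow> bool) \<Rightarrow> nat list \<Rightarrow> bool" where
  "crowded V c w xs \<longleftrightarrow> real (card {x \<in> set xs. w x}) > 8 * c * ln (real (card V))"

definition waypoints :: "nat set \<Rightarrow> real \<Rightarrow> (nat \<Rightarrow> bool) pmf" where
  "waypoints V p = Pi_pmf V False (\<lambda>_. bernoulli_pmf p)"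

end

theory Submission
  imports Defs "HOL-Analysis.Harmonic_Numbers"
begin

text \<open>All nodes of a short segment have the same level, so every edge of it is an
  LC-edge: the segment is a prefix of the LC-chain starting at its first node. Hence the
  crowded short segments are controlled by the \<open>n\<close> windows consisting of the first
  \<open>4 n^(1/k)\<close> nodes of the LC-chain from each node. A window contains at most
  \<open>4 n^(1/k)\<close> nodes, so its expected number of way-points is at most \<open>4 c log n\<close>,
  and Markov's inequality applied to \<open>2^X\<close> bounds the probability that it contains more
  than \<open>8 c log n\<close> way-points by \<open>n^(4c) / 2^(8 c log n) \<le> n^(-2)\<close>. A union bound over
  the \<open>n\<close> windows gives \<open>1/n\<close>.\<close>

lemma has_level_unique:
  "has_level RC v l \<Longrightarrow> has_level RC v l' \<Longrightarrow> l = l'"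
proof (induction arbitrary: l' rule: has_level.induct)
  case (base v)
  from base.prems show ?case
    by (cases rule: has_level.cases) (use base.hyps in simp_all)
next
  case (step v u l)
  from step.prems show ?case
  proof (cases rule: has_level.cases)
    case base
    with step.hyps(1) show ?thesis by simp
  next
    case (step u' l'')
    with \<open>RC v = Some u\<close> have "has_level RC u l''" by simp
    with step.IH show ?thesis using step by simp
  qed
qed

primrec lc_chain :: "(nat \<Rightarrow> nat option) \<Rightarrow> nat \<Rightarrow> nat \<Rightarrow> nat option" where
  "lc_chain LC x 0 = Some x"
| "lc_chain LC x (Suc i) = Option.bind (lc_chain LC x i) LC"

definition lc_window :: "nat set \<Rightarrow> (nat \<Rightarrow> nat option) \<Rightarrow> nat \<Rightarrow> nat \<Rightarrow> nat set" where
  "lc_window V LC N x = {y \<in> V. \<exists>i<N. lc_chain LC x i = Some y}"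

lemma card_lc_window_le: "card (lc_window V LC N x) \<le> N"
proof -
  have "lc_window V LC N x \<subseteq> (\<lambda>i. the (lc_chain LC x i)) ` {..<N}"
    unfolding lc_window_def by force
  then have "card (lc_window V LC N x) \<le> card ((\<lambda>i. the (lc_chain LC x i)) ` {..<N})"
    by (intro card_mono) auto
  also have "\<dots> \<le> N"
    using card_image_le[of "{..<N}"] by simp
  finally show ?thesis .
qed

lemma short_segment_is_dpath:
  "short_segment V P LC RC k xs \<Longrightarrow> is_dpath V P LC RC k xs"
  unfolding short_segment_def is_dcycle_def by blast

lemma short_segment_nth_lc_chain:
  assumes "short_segment V P LC RC k xs" and "i < length xs"
  shows "lc_chain LC (hd xs) i = Some (xs ! i)"
  using assms(2)
proof (induction i)
  case 0
  have "xs \<noteq> []"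
    using short_segment_is_dpath[OF assms(1)] unfolding is_dpath_def by blast
  then show ?case by (simp add: hd_conv_nth)
next
  case (Suc i)
  have "gk_edge V P LC RC k (xs ! i) (xs ! Suc i)"
    using short_segment_is_dpath[OF assms(1)] Suc.prems unfolding is_dpath_def by blast
  then obtain lu lv where
    lu: "has_level RC (xs ! Suc i) lu" and lv: "has_level RC (xs ! i) lv" and
    edge: "(LC (xs ! i) = Some (xs ! Suc i) \<and> lv = lu) \<or>
           (RC (xs ! i) = Some (xs ! Suc i) \<and> lv = lu + 1)"
    unfolding gk_edge_def by blast
  obtain l where "\<forall>x\<in>set xs. has_level RC x l"
    using assms(1) unfolding short_segment_def by blast
  then have "has_level RC (xs ! Suc i) l" and "has_level RC (xs ! i) l"
    using Suc.prems by auto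
  then have "lu = l" and "lv = l"
    using has_level_unique[OF lu] has_level_unique[OF lv] by simp_all
  then have "LC (xs ! i) = Some (xs ! Suc i)"
    using edge by auto
  then show ?case
    using Suc by simp
qed

lemma short_segment_subset_lc_window:
  assumes "short_segment V P LC RC k xs"
  shows "hd xs \<in> V"
    and "set xs \<subseteq> lc_window V LC (nat \<lfloor>4 * real (card V) powr (1 / real k)\<rfloor>) (hd xs)"
proof -
  have "xs \<noteq> []" and xs_V: "set xs \<subseteq> V"
    using short_segment_is_dpath[OF assms] unfolding is_dpath_def by auto
  then show "hd xs \<in> V" by auto
  show "set xs \<subseteq> lc_window V LC (nat \<lfloor>4 * real (card V) powr (1 / real k)\<rfloor>) (hd xs)"
  proof
    fix y assume "y \<in> set xs"
    then obtain i where i: "i < length xs" "y = xs ! i"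
      by (auto simp: in_set_conv_nth)
    have "real (Suc i) \<le> real (length xs)"
      using i(1) by simp
    also have "\<dots> \<le> 4 * real (card V) powr (1 / real k)"
      using assms unfolding short_segment_def by blast
    finally have "int (Suc i) \<le> \<lfloor>4 * real (card V) powr (1 / real k)\<rfloor>"
      by (simp add: le_floor_iff)
    then have "i < nat \<lfloor>4 * real (card V) powr (1 / real k)\<rfloor>"
      by linarith
    then show "y \<in> lc_window V LC (nat \<lfloor>4 * real (card V) powr (1 / real k)\<rfloor>) (hd xs)"
      unfolding lc_window_def
      using short_segment_nth_lc_chain[OF assms i(1)] i xs_V by auto
  qed
qed

lemma prob_Pi_bernoulli_count_gt:
  fixes V T :: "'a set"
  assumes fin: "finite V" and TV: "T \<subseteq> V" and p0: "0 \<le> p" and p1: "p \<le> 1"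
  shows "measure_pmf.prob (Pi_pmf V d (\<lambda>_. bernoulli_pmf p))
           {w. a < real (card {y\<in>T. w y})} \<le> exp (p * real (card T)) / 2 powr a"
proof -
  let ?M = "Pi_pmf V d (\<lambda>_. bernoulli_pmf p)"
  define f where "f y b = (if y \<in> T \<and> b then 2 else (1::real))" for y b
  define u where "u w = (\<Prod>y\<in>V. f y (w y))" for w
  have u_eq: "u w = 2 ^ card {y\<in>T. w y}" for w
  proof -
    have "u w = (\<Prod>y\<in>V \<inter> {y. y \<in> T \<and> w y}. 2) * (\<Prod>y\<in>V \<inter> - {y. y \<in> T \<and> w y}. 1)"
      unfolding u_def f_def using fin by (rule prod.If_cases)
    also have "V \<inter> {y. y \<in> T \<and> w y} = {y\<in>T. w y}"
      using TV by auto
    finally show ?thesis by simp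
  qed
  have "measure_pmf.expectation ?M u = (\<Prod>y\<in>V. measure_pmf.expectation (bernoulli_pmf p) (f y))"
    unfolding u_def
    by (rule expectation_prod_Pi_pmf[OF fin]) (auto simp: f_def intro!: integrable_measure_pmf_finite)
  also have "\<dots> = (\<Prod>y\<in>V. if y \<in> T then 1 + p else 1)"
    using p0 p1 by (intro prod.cong) (auto simp: f_def)
  also have "\<dots> = (1 + p) ^ card T"
    using fin TV by (simp add: prod.If_cases Int_absorb1)
  also have "\<dots> \<le> exp p ^ card T"
    by (intro power_mono) (use p0 exp_ge_add_one_self[of p] in auto)
  also have "\<dots> = exp (p * real (card T))"
    by (metis exp_of_nat_mult mult.commute)
  finally have E_u: "measure_pmf.expectation ?M u \<le> exp (p * real (card T))" .
  have "{w. a < real (card {y\<in>T. w y})} \<subseteq> {w \<in> space ?M. u w \<ge> 2 powr a}"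
  proof
    fix w assume "w \<in> {w. a < real (card {y\<in>T. w y})}"
    then have "2 powr a \<le> 2 powr real (card {y\<in>T. w y})"
      by simp
    then show "w \<in> {w \<in> space ?M. u w \<ge> 2 powr a}"
      by (simp add: u_eq powr_realpow)
  qed
  then have "measure_pmf.prob ?M {w. a < real (card {y\<in>T. w y})}
               \<le> measure_pmf.prob ?M {w \<in> space ?M. u w \<ge> 2 powr a}"
    by (rule measure_pmf.finite_measure_mono) simp
  also have "\<dots> \<le> measure_pmf.expectation ?M u / 2 powr a"
  proof (rule integral_Markov_inequality_measure)
    show "integrable ?M u"
      unfolding u_def by (rule integrable_prod_Pi_pmf[OF fin]) (auto intro!: integrable_measure_pmf_finite)
  qed (auto simp: u_eq)
  also have "\<dots> \<le> exp (p * real (card T)) / 2 powr a"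
    by (intro divide_right_mono E_u) simp
  finally show ?thesis .
qed

lemma exp_div_two_powr_le:
  fixes n c :: real
  assumes "n \<ge> 1" and "c \<ge> 3/2"
  shows "n * (exp (4 * c * ln n) / 2 powr (8 * c * ln n)) \<le> 1 / n"
proof -
  have "(3/2) * ln n * (4/3) \<le> c * ln n * (8 * ln 2 - 4)"
    by (intro mult_mono) (use assms ln2_ge_two_thirds in auto)
  then have "4 * c * ln n - 8 * c * ln n * ln 2 \<le> - 2 * ln n"
    by (simp add: algebra_simps)
  then have "exp (4 * c * ln n) / 2 powr (8 * c * ln n) \<le> exp (- 2 * ln n)"
    by (simp add: powr_def exp_diff[symmetric] mult.commute)
  also have "\<dots> = 1 / n ^ 2"
    using assms(1) exp_of_nat_mult[of 2 "ln n"] by (simp add: exp_minus mult.commute inverse_eq_divide)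
  finally have "n * (exp (4 * c * ln n) / 2 powr (8 * c * ln n)) \<le> n * (1 / n ^ 2)"
    using assms(1) by (intro mult_left_mono) auto
  also have "\<dots> = 1 / n"
    by (simp add: power2_eq_square)
  finally show ?thesis .
qed

lemma crowded_short_segments_subset_lc_windows:
  fixes k :: nat
  assumes "finite V"
  defines "N \<equiv> nat \<lfloor>4 * real (card V) powr (1 / real k)\<rfloor>"
  shows "{w. \<exists>xs. short_segment V P LC RC k xs \<and> crowded V c w xs}
           \<subseteq> (\<Union>x\<in>V. {w. 8 * c * ln (real (card V)) < real (card {y \<in> lc_window V LC N x. w y})})"
proof safe
  fix w xs assume seg: "short_segment V P LC RC k xs" and "crowded V c w xs"
  have "finite (lc_window V LC N (hd xs))"
    using assms(1) unfolding lc_window_def by simp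
  then have "card {y \<in> set xs. w y} \<le> card {y \<in> lc_window V LC N (hd xs). w y}"
    using short_segment_subset_lc_window(2)[OF seg] unfolding N_def by (intro card_mono) auto
  with \<open>crowded V c w xs\<close> show "w \<in> (\<Union>x\<in>V. {w. 8 * c * ln (real (card V))
           < real (card {y \<in> lc_window V LC N x. w y})})"
    using short_segment_subset_lc_window(1)[OF seg] unfolding crowded_def by force
qed

lemma prob_crowded_short_segment_le:
  fixes k :: nat
  assumes "finite V" and "0 \<le> p" and "p \<le> 1"
  defines "N \<equiv> nat \<lfloor>4 * real (card V) powr (1 / real k)\<rfloor>"
  shows "measure_pmf.prob (waypoints V p) {w. \<exists>xs. short_segment V P LC RC k xs \<and> crowded V c w xs}
           \<le> real (card V) * (exp (p * real N) / 2 powr (8 * c * ln (real (card V))))"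
proof -
  let ?a = "8 * c * ln (real (card V))"
  let ?W = "\<lambda>x. {w. ?a < real (card {y \<in> lc_window V LC N x. w y})}"
  have "measure_pmf.prob (waypoints V p) {w. \<exists>xs. short_segment V P LC RC k xs \<and> crowded V c w xs}
          \<le> measure_pmf.prob (waypoints V p) (\<Union>x\<in>V. ?W x)"
    using crowded_short_segments_subset_lc_windows[OF assms(1)] unfolding N_def
    by (rule measure_pmf.finite_measure_mono) simp
  also have "\<dots> \<le> (\<Sum>x\<in>V. measure_pmf.prob (waypoints V p) (?W x))"
    by (rule measure_pmf.finite_measure_subadditive_finite[OF assms(1)]) simp
  also have "\<dots> \<le> (\<Sum>x\<in>V. exp (p * real N) / 2 powr ?a)"
  proof (rule sum_mono)
    fix x
    have "measure_pmf.prob (waypoints V p) (?W x)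
            \<le> exp (p * real (card (lc_window V LC N x))) / 2 powr ?a"
      unfolding waypoints_def
      by (rule prob_Pi_bernoulli_count_gt[OF assms(1) _ assms(2,3)]) (auto simp: lc_window_def)
    also have "\<dots> \<le> exp (p * real N) / 2 powr ?a"
      using card_lc_window_le[of V LC N x] assms(2)
      by (intro divide_right_mono) (auto intro: mult_left_mono)
    finally show "measure_pmf.prob (waypoints V p) (?W x) \<le> exp (p * real N) / 2 powr ?a" .
  qed
  also have "\<dots> = real (card V) * (exp (p * real N) / 2 powr ?a)"
    by simp
  finally show ?thesis .
qed

theorem mainTheorem8:
  shows "\<exists>C>0. \<forall>(V::nat set) E P LC RC (chi::nat \<Rightarrow> color) (k::nat) (c::real).
    finite V \<and> card V \<ge> 1 \<and> colored_tree_labeling V E P LC RC chi \<and> k \<ge> 1 \<and> c \<ge> 3/2 \<and>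
    c * ln (real (card V)) / real (card V) powr (1 / real k) \<le> 1 \<longrightarrow>
    measure_pmf.prob
      (waypoints V (c * ln (real (card V)) / real (card V) powr (1 / real k)))
      {w. \<exists>xs. short_segment V P LC RC k xs \<and> crowded V c w xs}
    \<le> C / real (card V)"
proof (intro exI[of _ 1] conjI allI impI)
  fix V :: "nat set" and E P LC RC and chi :: "nat \<Rightarrow> color" and k :: nat and c :: real
  define n where "n = real (card V)"
  define p where "p = c * ln n / n powr (1 / real k)"
  assume "finite V \<and> card V \<ge> 1 \<and> colored_tree_labeling V E P LC RC chi \<and> k \<ge> 1 \<and> c \<ge> 3/2 \<and>
    c * ln (real (card V)) / real (card V) powr (1 / real k) \<le> 1"
  then have fin: "finite V" and n: "n \<ge> 1" and c: "c \<ge> 3/2" and p1: "p \<le> 1"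
    by (auto simp: n_def p_def)
  have p0: "p \<ge> 0"
    unfolding p_def using c n by simp
  have "p * real (nat \<lfloor>4 * n powr (1 / real k)\<rfloor>) \<le> p * (4 * n powr (1 / real k))"
    using p0 n by (intro mult_left_mono) simp_all
  also have "\<dots> = 4 * c * ln n"
    unfolding p_def using n by simp
  finally have expected: "p * real (nat \<lfloor>4 * n powr (1 / real k)\<rfloor>) \<le> 4 * c * ln n" .
  have "measure_pmf.prob (waypoints V p) {w. \<exists>xs. short_segment V P LC RC k xs \<and> crowded V c w xs}
          \<le> n * (exp (p * real (nat \<lfloor>4 * n powr (1 / real k)\<rfloor>)) / 2 powr (8 * c * ln n))"
    using prob_crowded_short_segment_le[OF fin p0 p1] unfolding n_def .
  also have "\<dots> \<le> n * (exp (4 * c * ln n) / 2 powr (8 * c * ln n))"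
    using expected n by (intro mult_left_mono divide_right_mono) auto
  also have "\<dots> \<le> 1 / n"
    using n c by (rule exp_div_two_powr_le)
  finally show "measure_pmf.prob (waypoints V (c * ln (real (card V)) / real (card V) powr (1 / real k)))
      {w. \<exists>xs. short_segment V P LC RC k xs \<and> crowded V c w xs} \<le> 1 / real (card V)"
    unfolding p_def n_def .
qed simp

end
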